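(* The bound of Corollary 9 is optimal: there exist $n$-qubit unitary stabilizer circuits such that every equivalent unitary stabilizer circuit has $\Omega(n^2/\log n)$ gates.
   Context: A unitary stabilizer circuit is a circuit consisting only of CNOT, Hadamard and phase ($\mathrm{diag}(1,i)$) gates, each gate acting on specified qubits among $n$. Two such circuits are equivalent if the unitaries they implement agree up to a global phase. Corollary 9 states that every $n$-qubit unitary stabilizer circuit has an equivalent one with $O(n^2/\log n)$ gates. *)

theory Defs
  imports Complex_Main "Jordan_Normal_Form.Matrix"
begin

text \<open>Gates of unitary stabilizer circuits. Qubits are indexed by naturals 0..n-1.
  CNOT c t has control c and target t; S is the phase gate diag(1,i).\<close>
datatype gate = CNOT nat nat | Had nat | Phase nat

text \<open>Computational basis states of n qubits are indexed by x < 2^n; qubit q of x is bit q.\<close>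
definition qbit :: "nat \<Rightarrow> nat \<Rightarrow> nat" where
  "qbit q x = (x div 2 ^ q) mod 2"

definition flip_bit :: "nat \<Rightarrow> nat \<Rightarrow> nat" where
  "flip_bit q x = (if qbit q x = 1 then x - 2 ^ q else x + 2 ^ q)"

definition gate_ok :: "nat \<Rightarrow> gate \<Rightarrow> bool" where
  "gate_ok n g = (case g of
       CNOT c t \<Rightarrow> c < n \<and> t < n \<and> c \<noteq> t
     | Had q \<Rightarrow> q < n
     | Phase q \<Rightarrow> q < n)"

definition circuit_ok :: "nat \<Rightarrow> gate list \<Rightarrow> bool" where
  "circuit_ok n C = (\<forall>g \<in> set C. gate_ok n g)"

text \<open>The 2^n x 2^n unitary of a gate acting on n qubits; entry (r,c) = <r|G|c>.\<close>
definition gate_mat :: "nat \<Rightarrow> gate \<Rightarrow> complex mat" where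
  "gate_mat n g = mat (2 ^ n) (2 ^ n) (\<lambda>(r, c). case g of
       CNOT a b \<Rightarrow> (if r = (if qbit a c = 1 then flip_bit b c else c) then 1 else 0)
     | Had q \<Rightarrow> (if r = c \<or> r = flip_bit q c
                 then (if qbit q r = 1 \<and> qbit q c = 1 then - 1 else 1) / complex_of_real (sqrt 2)
                 else 0)
     | Phase q \<Rightarrow> (if r = c then (if qbit q c = 1 then \<i> else 1) else 0))"

text \<open>Unitary implemented by a circuit: the first gate of the list is applied first.\<close>
definition circuit_mat :: "nat \<Rightarrow> gate list \<Rightarrow> complex mat" where
  "circuit_mat n C = foldl (\<lambda>M g. gate_mat n g * M) (1\<^sub>m (2 ^ n)) C"

definition circuit_equiv :: "nat \<Rightarrow> gate list \<Rightarrow> gate list \<Rightarrow> bool" where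
  "circuit_equiv n C D = (\<exists>z::complex. cmod z = 1 \<and> circuit_mat n C = z \<cdot>\<^sub>m circuit_mat n D)"

end

(* CNOT circuits permute the computational basis, so their unitaries are permutation
   matrices, and two of them agree up to a global phase only if they compute the same
   permutation. For S \<subseteq> [m] \<times> [m], the circuit of CNOTs with control i and target m + j,
   (i, j) \<in> S, sends the basis state 2^i to a state whose bit m + j records whether
   (i, j) \<in> S; with m = n div 2 this gives 2^(m^2) pairwise inequivalent circuits. There are
   at most n^3 gates, hence at most (n^3)^(2K) circuits with at most K gates, so some
   circuit of the family has no equivalent with K gates unless m^2 ln 2 \<le> 6 K ln n. *)

theory Submission
  imports Defs
begin

lemma qbit_eq_of_bool_bit: "qbit q x = of_bool (bit x q)"
  unfolding qbit_def by (simp add: bit_iff_odd odd_iff_mod_2_eq_one)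

lemma unset_bit_nat_eq_diff:
  assumes "bit (x::nat) b"
  shows "unset_bit b x = x - 2 ^ b"
proof -
  have "x = set_bit b (unset_bit b x)"
    using assms by (intro bit_eqI) (auto simp: bit_set_bit_iff bit_unset_bit_iff)
  also have "\<dots> = unset_bit b x + 2 ^ b"
    by (simp add: set_bit_eq bit_unset_bit_iff)
  finally show ?thesis by simp
qed

lemma flip_bit_eq_bit_flip_bit: "Defs.flip_bit b x = Bit_Operations.flip_bit b x"
  unfolding Defs.flip_bit_def qbit_eq_of_bool_bit
  by (simp add: flip_bit_eq_if set_bit_eq unset_bit_nat_eq_diff)

lemma flip_bit_less_power: "x < 2 ^ n \<Longrightarrow> b < n \<Longrightarrow> Defs.flip_bit b x < 2 ^ n"
  unfolding flip_bit_eq_bit_flip_bit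
  by (metis take_bit_flip_bit_eq take_bit_nat_eq_self_iff not_le)

definition cnot_basis :: "nat \<Rightarrow> nat \<Rightarrow> nat \<Rightarrow> nat" where
  "cnot_basis a b x = (if qbit a x = 1 then flip_bit b x else x)"

lemma qbit_cnot_basis:
  "a \<noteq> b \<Longrightarrow> qbit q (cnot_basis a b x) = (if q = b then (qbit b x + qbit a x) mod 2 else qbit q x)"
  unfolding cnot_basis_def qbit_eq_of_bool_bit flip_bit_eq_bit_flip_bit by (auto simp: bit_flip_bit_iff)

lemma cnot_basis_less_power: "x < 2 ^ n \<Longrightarrow> b < n \<Longrightarrow> cnot_basis a b x < 2 ^ n"
  unfolding cnot_basis_def by (simp add: flip_bit_less_power)

definition perm_mat :: "nat \<Rightarrow> (nat \<Rightarrow> nat) \<Rightarrow> 'a :: semiring_1 mat" where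
  "perm_mat N f = mat N N (\<lambda>(r, c). of_bool (r = f c))"

lemma perm_mat_id: "perm_mat N id = 1\<^sub>m N"
  by (rule eq_matI) (auto simp: perm_mat_def)

lemma perm_mat_mult:
  assumes "\<forall>c<N. f c < N"
  shows "perm_mat N g * perm_mat N f = (perm_mat N (g \<circ> f) :: 'a :: semiring_1 mat)"
proof (rule eq_matI)
  fix i j assume "i < dim_row (perm_mat N (g \<circ> f) :: 'a mat)" "j < dim_col (perm_mat N (g \<circ> f) :: 'a mat)"
  hence i: "i < N" and j: "j < N" by (auto simp: perm_mat_def)
  have "(perm_mat N g * perm_mat N f :: 'a mat) $$ (i, j) = (\<Sum>k<N. of_bool (i = g k) * of_bool (k = f j))"
    using i j by (simp add: perm_mat_def scalar_prod_def lessThan_atLeast0)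
  also have "\<dots> = (\<Sum>k<N. if k = f j then of_bool (i = g k) else 0)"
    by (rule sum.cong) auto
  also have "\<dots> = of_bool (i = g (f j))"
    using assms j by simp
  finally show "(perm_mat N g * perm_mat N f :: 'a mat) $$ (i, j) = perm_mat N (g \<circ> f) $$ (i, j)"
    using i j by (simp add: perm_mat_def)
qed (auto simp: perm_mat_def)

lemma perm_mat_eq_smult_imp_eq:
  assumes "perm_mat N f = z \<cdot>\<^sub>m (perm_mat N g :: 'a :: semiring_1 mat)" "c < N" "f c < N"
  shows "f c = g c"
proof (rule ccontr)
  assume "f c \<noteq> g c"
  have "perm_mat N f $$ (f c, c) = (z \<cdot>\<^sub>m (perm_mat N g :: 'a mat)) $$ (f c, c)"
    by (simp only: assms(1))
  with \<open>f c \<noteq> g c\<close> assms(2,3) show False by (simp add: perm_mat_def)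
qed

lemma circuit_equiv_common:
  assumes "circuit_equiv n C D" "circuit_equiv n C' D"
  shows "circuit_equiv n C C'"
proof -
  obtain z where z: "circuit_mat n C = z \<cdot>\<^sub>m circuit_mat n D" "cmod z = 1"
    using assms(1) unfolding circuit_equiv_def by blast
  obtain z' where z': "circuit_mat n C' = z' \<cdot>\<^sub>m circuit_mat n D" "cmod z' = 1"
    using assms(2) unfolding circuit_equiv_def by blast
  have "z' \<noteq> 0" using z'(2) by auto
  have "circuit_mat n C = (z / z') \<cdot>\<^sub>m circuit_mat n C'"
    unfolding z(1) z'(1) using \<open>z' \<noteq> 0\<close> by (intro eq_matI) auto
  moreover have "cmod (z / z') = 1" using z(2) z'(2) by (simp add: norm_divide)
  ultimately show ?thesis unfolding circuit_equiv_def by blast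
qed

definition cnot_circuit :: "nat \<Rightarrow> gate list \<Rightarrow> bool" where
  "cnot_circuit n C = (\<forall>g\<in>set C. \<exists>a b. g = CNOT a b \<and> b < n)"

fun cnot_circuit_fun :: "gate list \<Rightarrow> nat \<Rightarrow> nat" where
  "cnot_circuit_fun [] = id"
| "cnot_circuit_fun (CNOT a b # C) = cnot_circuit_fun C \<circ> cnot_basis a b"
| "cnot_circuit_fun (_ # C) = cnot_circuit_fun C"

lemma cnot_circuit_fun_less_power:
  "cnot_circuit n C \<Longrightarrow> x < 2 ^ n \<Longrightarrow> cnot_circuit_fun C x < 2 ^ n"
proof (induction C arbitrary: x)
  case (Cons g C)
  then obtain a b where "g = CNOT a b" "b < n" by (auto simp: cnot_circuit_def)
  with Cons show ?case by (simp add: cnot_circuit_def cnot_basis_less_power)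
qed simp

lemma gate_mat_CNOT: "gate_mat n (CNOT a b) = perm_mat (2 ^ n) (cnot_basis a b)"
  unfolding gate_mat_def perm_mat_def cnot_basis_def of_bool_def by simp

lemma foldl_gate_mat_perm_mat:
  assumes "cnot_circuit n C" "\<forall>x<2 ^ n. f x < 2 ^ n"
  shows "foldl (\<lambda>M g. gate_mat n g * M) (perm_mat (2 ^ n) f) C = perm_mat (2 ^ n) (cnot_circuit_fun C \<circ> f)"
  using assms
proof (induction C arbitrary: f)
  case (Cons g C)
  then obtain a b where g: "g = CNOT a b" "b < n" and C: "cnot_circuit n C"
    by (auto simp: cnot_circuit_def)
  have "gate_mat n g * perm_mat (2 ^ n) f = perm_mat (2 ^ n) (cnot_basis a b \<circ> f)"
    unfolding g gate_mat_CNOT using Cons.prems(2) by (rule perm_mat_mult)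
  moreover have "\<forall>x<2 ^ n. (cnot_basis a b \<circ> f) x < 2 ^ n"
    using Cons.prems(2) g(2) by (simp add: cnot_basis_less_power)
  ultimately show ?case using Cons.IH[OF C] g by (simp add: comp_assoc)
qed simp

lemma circuit_mat_cnot_circuit:
  "cnot_circuit n C \<Longrightarrow> circuit_mat n C = perm_mat (2 ^ n) (cnot_circuit_fun C)"
  unfolding circuit_mat_def perm_mat_id[symmetric] by (simp add: foldl_gate_mat_perm_mat)

lemma equiv_cnot_circuits_imp_fun_eq:
  assumes "cnot_circuit n C" "cnot_circuit n C'" "circuit_equiv n C C'" "x < 2 ^ n"
  shows "cnot_circuit_fun C x = cnot_circuit_fun C' x"
proof -
  obtain z :: complex
    where "perm_mat (2 ^ n) (cnot_circuit_fun C) = z \<cdot>\<^sub>m perm_mat (2 ^ n) (cnot_circuit_fun C')"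
    using assms(3) unfolding circuit_equiv_def circuit_mat_cnot_circuit[OF assms(1)]
      circuit_mat_cnot_circuit[OF assms(2)] by blast
  then show ?thesis
    using assms(4) cnot_circuit_fun_less_power[OF assms(1,4)] by (rule perm_mat_eq_smult_imp_eq)
qed

definition bipartite_cnot :: "nat \<Rightarrow> nat \<times> nat \<Rightarrow> gate" where
  "bipartite_cnot m p = CNOT (fst p) (m + snd p)"

lemma qbit_target_bipartite_cnots:
  assumes "\<forall>p\<in>set ps. fst p < m"
  shows "qbit (m + j) (cnot_circuit_fun (map (bipartite_cnot m) ps) x) =
     (qbit (m + j) x + length (filter (\<lambda>p. snd p = j \<and> qbit (fst p) x = 1) ps)) mod 2"
  using assms
proof (induction ps arbitrary: x)
  case Nil
  then show ?case by (simp add: qbit_def)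
next
  case (Cons p ps)
  define y where "y = cnot_basis (fst p) (m + snd p) x"
  have "fst p \<noteq> m + snd p" using Cons.prems by auto
  then have y: "qbit q y = (if q = m + snd p then (qbit q x + qbit (fst p) x) mod 2 else qbit q x)" for q
    unfolding y_def by (simp add: qbit_cnot_basis)
  have "cnot_circuit_fun (map (bipartite_cnot m) (p # ps)) x = cnot_circuit_fun (map (bipartite_cnot m) ps) y"
    by (simp add: bipartite_cnot_def y_def)
  also have "qbit (m + j) \<dots> = (qbit (m + j) y + length (filter (\<lambda>p. snd p = j \<and> qbit (fst p) y = 1) ps)) mod 2"
    using Cons by simp
  also have "filter (\<lambda>p. snd p = j \<and> qbit (fst p) y = 1) ps = filter (\<lambda>p. snd p = j \<and> qbit (fst p) x = 1) ps"
    using Cons.prems y by (intro filter_cong) auto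
  finally show ?case
    using y[of "m + j"] qbit_eq_of_bool_bit[of "fst p" x] by (auto simp: mod_add_left_eq ac_simps)
qed

definition bipartite_circuit :: "nat \<Rightarrow> (nat \<times> nat) set \<Rightarrow> gate list" where
  "bipartite_circuit m S = map (bipartite_cnot m) (filter (\<lambda>p. p \<in> S) (List.product [0..<m] [0..<m]))"

lemma circuit_ok_bipartite_circuit: "2 * m \<le> n \<Longrightarrow> circuit_ok n (bipartite_circuit m S)"
  by (auto simp: bipartite_circuit_def circuit_ok_def gate_ok_def bipartite_cnot_def)

lemma cnot_circuit_bipartite_circuit: "2 * m \<le> n \<Longrightarrow> cnot_circuit n (bipartite_circuit m S)"
  by (auto simp: bipartite_circuit_def cnot_circuit_def bipartite_cnot_def)

lemma qbit_bipartite_circuit_basis: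
  assumes "i < m" "j < m"
  shows "qbit (m + j) (cnot_circuit_fun (bipartite_circuit m S) (2 ^ i)) = of_bool ((i, j) \<in> S)"
proof -
  let ?ps = "filter (\<lambda>p. p \<in> S) (List.product [0..<m] [0..<m])"
  have qbit_basis: "qbit q (2 ^ i) = of_bool (q = i)" for q
    by (simp add: qbit_eq_of_bool_bit bit_exp_iff)
  have "{p. snd p = j \<and> qbit (fst p) (2 ^ i) = 1} \<inter> set ?ps = (if (i, j) \<in> S then {(i, j)} else {})"
    using assms by (auto simp: qbit_basis)
  moreover have "distinct ?ps" by (simp add: distinct_product)
  ultimately have "length (filter (\<lambda>p. snd p = j \<and> qbit (fst p) (2 ^ i) = 1) ?ps) = of_bool ((i, j) \<in> S)"
    by (simp only: distinct_length_filter) simp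
  moreover have "\<forall>p\<in>set ?ps. fst p < m" by auto
  ultimately show ?thesis
    unfolding bipartite_circuit_def using assms by (simp add: qbit_target_bipartite_cnots qbit_basis)
qed

lemma bipartite_circuit_equiv_imp_eq:
  assumes "2 * m \<le> n" "S \<subseteq> {..<m} \<times> {..<m}" "T \<subseteq> {..<m} \<times> {..<m}"
    and "circuit_equiv n (bipartite_circuit m S) (bipartite_circuit m T)"
  shows "S = T"
proof -
  have "(i, j) \<in> S \<longleftrightarrow> (i, j) \<in> T" if "i < m" "j < m" for i j
  proof -
    have "(2::nat) ^ i < 2 ^ n" using that assms(1) by simp
    then have "cnot_circuit_fun (bipartite_circuit m S) (2 ^ i) = cnot_circuit_fun (bipartite_circuit m T) (2 ^ i)"
      using assms(1,4) by (intro equiv_cnot_circuits_imp_fun_eq cnot_circuit_bipartite_circuit)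
    then show ?thesis using qbit_bipartite_circuit_basis[OF that] by (metis of_bool_eq_iff)
  qed
  then show ?thesis using assms(2,3) by blast
qed

lemma card_lists_length_le_le_power:
  assumes "finite A" "2 \<le> card A"
  shows "card {xs. set xs \<subseteq> A \<and> length xs \<le> K} \<le> card A ^ (2 * K)"
proof -
  have "card {xs. set xs \<subseteq> A \<and> length xs \<le> K} = (\<Sum>i\<le>K. card A ^ i)"
    using assms(1) by (rule card_lists_length_le)
  also have "\<dots> \<le> (\<Sum>i\<le>K. card A ^ K)"
    using assms(2) by (intro sum_mono power_increasing) auto
  also have "\<dots> = (K + 1) * card A ^ K" by simp
  also have "\<dots> \<le> 2 ^ K * card A ^ K"
    by (intro mult_right_mono) (simp_all add: Suc_leI)
  also have "\<dots> \<le> card A ^ K * card A ^ K"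
    using assms(2) by (intro mult_right_mono power_mono) auto
  also have "\<dots> = card A ^ (2 * K)" by (simp add: power_add[symmetric] mult_2)
  finally show ?thesis .
qed

lemma gates_subset:
  "{g. gate_ok n g} \<subseteq> case_prod CNOT ` ({..<n} \<times> {..<n}) \<union> Had ` {..<n} \<union> Phase ` {..<n}"
proof
  fix g assume "g \<in> {g. gate_ok n g}"
  then show "g \<in> case_prod CNOT ` ({..<n} \<times> {..<n}) \<union> Had ` {..<n} \<union> Phase ` {..<n}"
    by (cases g) (auto simp: gate_ok_def)
qed

lemma finite_gates: "finite {g. gate_ok n g}"
  by (rule finite_subset[OF gates_subset]) simp

lemma card_gates_le:
  assumes "2 \<le> n"
  shows "card {g. gate_ok n g} \<le> n ^ 3"
proof -
  have "card {g. gate_ok n g} \<le> card (case_prod CNOT ` ({..<n} \<times> {..<n}) \<union> Had ` {..<n} \<union> Phase ` {..<n})"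
    by (intro card_mono gates_subset) simp
  also have "\<dots> \<le> n * n + n + n"
    by (intro card_Un_le[THEN order_trans] add_mono card_image_le[THEN order_trans]) (auto simp: card_cartesian_product)
  also have "\<dots> \<le> n ^ 3"
  proof -
    have "2 * n \<le> n * n" and "2 * (n * n) \<le> n * (n * n)"
      using mult_le_mono1[OF assms] by blast+
    then show ?thesis by (simp only: power3_eq_cube mult.assoc)
  qed
  finally show ?thesis .
qed

lemma two_le_card_gates: "2 \<le> n \<Longrightarrow> 2 \<le> card {g. gate_ok n g}"
  using card_mono[OF finite_gates, of "{Had 0, Had 1}" n] by (simp add: gate_ok_def)

lemma exists_bipartite_circuit_without_short_equivalent:
  assumes "2 \<le> n" "2 * m \<le> n" "(n ^ 3) ^ (2 * K) < 2 ^ (m * m)"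
  shows "\<exists>S. \<forall>D. circuit_ok n D \<and> circuit_equiv n (bipartite_circuit m S) D \<longrightarrow> K < length D"
proof (rule ccontr)
  let ?P = "Pow ({..<m} \<times> {..<m})" and ?G = "{g. gate_ok n g}"
  assume "\<not> ?thesis"
  then obtain short where short: "\<And>S. circuit_ok n (short S) \<and>
      circuit_equiv n (bipartite_circuit m S) (short S) \<and> length (short S) \<le> K"
    by (metis not_less)
  have "inj_on short ?P"
  proof (rule inj_onI)
    fix S T assume "S \<in> ?P" "T \<in> ?P" "short S = short T"
    moreover have "circuit_equiv n (bipartite_circuit m S) (bipartite_circuit m T)"
      using short \<open>short S = short T\<close> circuit_equiv_common by metis
    ultimately show "S = T" using bipartite_circuit_equiv_imp_eq[OF assms(2)] by blast
  qed
  moreover have "short ` ?P \<subseteq> {D. set D \<subseteq> ?G \<and> length D \<le> K}"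
    using short by (auto simp: circuit_ok_def)
  ultimately have "card ?P \<le> card {D. set D \<subseteq> ?G \<and> length D \<le> K}"
    by (intro card_inj_on_le) (simp_all add: finite_lists_length_le finite_gates)
  also have "\<dots> \<le> card ?G ^ (2 * K)"
    using assms(1) by (intro card_lists_length_le_le_power finite_gates two_le_card_gates)
  also have "\<dots> \<le> (n ^ 3) ^ (2 * K)"
    using assms(1) by (intro power_mono card_gates_le) simp_all
  finally show False
    using assms(3) by (simp add: card_Pow card_cartesian_product)
qed

lemma ln_2_ge_half: "1 / 2 \<le> ln (2::real)"
proof -
  have "ln (exp (1 / 2)) \<le> ln (2::real)"
    using exp_half_le2 by (subst ln_le_cancel_iff) auto
  then show ?thesis by simp
qed

lemma cube_power_less_two_power_square_half:
  assumes "6 \<le> n" "real K \<le> real n ^ 2 / (192 * ln (real n))"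
  shows "(n ^ 3) ^ (2 * K) < (2::nat) ^ (n div 2 * (n div 2))"
proof -
  let ?m = "n div 2"
  have ln_pos: "0 < ln (real n)" using assms(1) by simp
  have "real (n ^ 2) \<le> 8 * real (?m * ?m)"
  proof -
    have "real n - 1 \<le> 2 * real ?m" by linarith
    then have "(real n - 1) ^ 2 \<le> (2 * real ?m) ^ 2" using assms(1) by (intro power_mono) simp_all
    moreover have "0 \<le> real n * (real n - 4)" using assms(1) by simp
    ultimately show ?thesis by (simp add: power2_eq_square algebra_simps)
  qed
  have "ln (real ((n ^ 3) ^ (2 * K))) = 6 * (real K * ln (real n))"
    using assms(1) by (simp add: ln_realpow)
  also have "\<dots> \<le> real n ^ 2 / 32"
    using mult_right_mono[OF assms(2) less_imp_le[OF ln_pos]] ln_pos by (simp add: field_simps)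
  also have "\<dots> < real n ^ 2 / 16"
    using assms(1) by simp
  also have "\<dots> \<le> real (?m * ?m) / 2"
    using \<open>real (n ^ 2) \<le> 8 * real (?m * ?m)\<close> by simp
  also have "\<dots> \<le> real (?m * ?m) * ln 2"
    using mult_left_mono[OF ln_2_ge_half, of "real (?m * ?m)"] by simp
  also have "\<dots> = ln (real (2 ^ (?m * ?m)))"
    by (simp add: ln_realpow)
  finally have "ln (real ((n ^ 3) ^ (2 * K))) < ln (real (2 ^ (?m * ?m)))" .
  then have "real ((n ^ 3) ^ (2 * K)) < real (2 ^ (?m * ?m))"
    using assms(1) by (subst (asm) ln_less_cancel_iff) simp_all
  then show ?thesis by (simp only: of_nat_less_iff)
qed

theorem mainTheorem11:
  shows "\<exists>c::real > 0. \<exists>N::nat. \<forall>n \<ge> N. \<exists>C. circuit_ok n C \<and>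
           (\<forall>D. circuit_ok n D \<and> circuit_equiv n C D \<longrightarrow>
                 real (length D) \<ge> c * real n ^ 2 / ln (real n))"
proof (intro exI[of _ "1/192"] conjI exI[of _ 6] allI impI)
  fix n :: nat
  assume n: "6 \<le> n"
  define L where "L = real n ^ 2 / (192 * ln (real n))"
  define m where "m = n div 2"
  define K where "K = nat \<lfloor>L\<rfloor>"
  have "0 \<le> L" using n by (simp add: L_def)
  then have K: "real K \<le> L" "L < real K + 1"
    unfolding K_def by linarith+
  then have "(n ^ 3) ^ (2 * K) < 2 ^ (m * m)"
    unfolding m_def L_def using n by (intro cube_power_less_two_power_square_half)
  then obtain S where S: "\<forall>D. circuit_ok n D \<and> circuit_equiv n (bipartite_circuit m S) D \<longrightarrow> K < length D"
    using exists_bipartite_circuit_without_short_equivalent[of n m K] n by (auto simp: m_def)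
  show "\<exists>C. circuit_ok n C \<and> (\<forall>D. circuit_ok n D \<and> circuit_equiv n C D \<longrightarrow>
                 real (length D) \<ge> 1/192 * real n ^ 2 / ln (real n))"
  proof (intro exI conjI allI impI)
    show "circuit_ok n (bipartite_circuit m S)"
      by (rule circuit_ok_bipartite_circuit) (simp add: m_def)
    fix D assume "circuit_ok n D \<and> circuit_equiv n (bipartite_circuit m S) D"
    then have "real K + 1 \<le> real (length D)" using S by fastforce
    then show "1/192 * real n ^ 2 / ln (real n) \<le> real (length D)"
      using K by (simp add: L_def)
  qed
qed simp

end
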